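(* Let $n\ge5$ and define $F:(0,\infty)\to\mathbb{R}$ by $$F(\rho)=\pi n^2\int_0^\infty\frac{s^n}{(1+s^n)^2}\frac{ds}{(\rho^2+s)^2}.$$ Then the metric $F(|a|)\,da\,d\bar a$ on $\mathbb{C}^\times=\mathbb{C}\setminus\{0\}$ (which is invariant under $a\mapsto1/a$) extends to a $C^3$ Riemannian metric $\overline\gamma_n$ on the Riemann sphere $S^2=\mathbb{C}^\times\cup\{0,\infty\}$.
   Context: This metric is the pullback of the induced $L^2$ metric on the space ${\sf Rat}_n^{eq}$ of rotationally equivariant degree $n$ rational maps $W(z)=cz^n$, $c\in\mathbb{C}^\times$, under the $n$-fold covering $a\mapsto[z\mapsto(az)^n]$. *)

theory Defs
  imports "HOL-Analysis.Analysis"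
begin

definition Ffac :: "nat \<Rightarrow> real \<Rightarrow> real" where
  "Ffac n \<rho> = pi * (real n)^2 *
     integral {0<..} (\<lambda>s::real. s ^ n / (1 + s ^ n)^2 / (\<rho>^2 + s)^2)"

fun iter_pd :: "complex list \<Rightarrow> (complex \<Rightarrow> real) \<Rightarrow> complex \<Rightarrow> real" where
  "iter_pd [] g = g"
| "iter_pd (v # vs) g = (\<lambda>x. deriv (\<lambda>t::real. iter_pd vs g (x + of_real t * v)) 0)"

definition Ck_on :: "nat \<Rightarrow> complex set \<Rightarrow> (complex \<Rightarrow> real) \<Rightarrow> bool" where
  "Ck_on k S g \<longleftrightarrow> open S \<and>
     (\<forall>vs v x. length vs < k \<and> set (v # vs) \<subseteq> {1, \<i>} \<and> x \<in> S \<longrightarrow>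
        (\<lambda>t::real. iter_pd vs g (x + of_real t * v)) differentiable (at 0)) \<and>
     (\<forall>vs. length vs \<le> k \<and> set vs \<subseteq> {1, \<i>} \<longrightarrow> continuous_on S (iter_pd vs g))"

end

theory Submission
  imports Defs
begin

text \<open>
  Substituting s = (u/(1-u))^2 in the integral defining Ffac n \<rho> gives
  Ffac n \<rho> = pi n^2 K(\<rho>^2), where K(r) is the integral over u \<in> [0,1] of a kernel that is
  bounded by a multiple of u uniformly in r \<ge> 0 (as long as the power of 1/(r+s) does not
  exceed n) and jointly continuous on [0,\<infinity>) \<times> [0,1]. Differentiation under the integral
  sign then shows that K is three times differentiable on the closed half line [0,\<infinity>),
  including at r = 0; this uses the kernels with powers 2, ..., 5 of 1/(r+s), whence n \<ge> 5.
  The inversion s \<mapsto> 1/s corresponds to the reflection u \<mapsto> 1-u, which yields the same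
  formula Ffac n (1/\<rho>) / \<rho>^4 = pi n^2 K(\<rho>^2), so one function G(x) = pi n^2 K(|x|^2)
  serves for both charts of the sphere.
\<close>

section \<open>Radial functions of the squared radius\<close>

text \<open>Squared Euclidean norm of a point of the plane, written in coordinates so that its
  directional derivatives are polynomial.\<close>
definition norm_sq :: "complex \<Rightarrow> real" where
  "norm_sq x = (Re x)^2 + (Im x)^2"

lemma norm_sq_nonneg: "norm_sq x \<ge> 0"
  by (simp add: norm_sq_def)

lemma norm_sq_eq_cmod_sq: "norm_sq x = (cmod x)^2"
  by (simp add: norm_sq_def cmod_power2)

lemma norm_sq_directional_deriv:
  "((\<lambda>t. norm_sq (x + of_real t * v)) has_real_derivative 2 * (Re x * Re v + Im x * Im v)) (at 0)"
  unfolding norm_sq_def by (auto intro!: derivative_eq_intros simp: algebra_simps)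

inductive plane_poly :: "(complex \<Rightarrow> real) \<Rightarrow> bool" where
  const: "plane_poly (\<lambda>x. c)"
| re: "plane_poly (\<lambda>x. Re x)"
| im: "plane_poly (\<lambda>x. Im x)"
| add: "plane_poly p \<Longrightarrow> plane_poly q \<Longrightarrow> plane_poly (\<lambda>x. p x + q x)"
| mult: "plane_poly p \<Longrightarrow> plane_poly q \<Longrightarrow> plane_poly (\<lambda>x. p x * q x)"

lemma plane_poly_continuous: "plane_poly p \<Longrightarrow> continuous_on UNIV p"
  by (induction rule: plane_poly.induct) (auto intro!: continuous_intros)

lemma plane_poly_directional_deriv:
  assumes "plane_poly p"
  shows "\<exists>dp. plane_poly dp \<and> (\<forall>x. ((\<lambda>t. p (x + of_real t * v)) has_real_derivative dp x) (at 0))"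
  using assms
proof (induction rule: plane_poly.induct)
  case (const c)
  show ?case
    by (intro exI[of _ "\<lambda>x. 0"] conjI plane_poly.const allI) simp
next
  case re
  have "((\<lambda>t. Re (x + of_real t * v)) has_real_derivative Re v) (at 0)" for x
    by (auto intro!: derivative_eq_intros)
  then show ?case
    by (intro exI[of _ "\<lambda>x. Re v"] conjI plane_poly.const) auto
next
  case im
  have "((\<lambda>t. Im (x + of_real t * v)) has_real_derivative Im v) (at 0)" for x
    by (auto intro!: derivative_eq_intros)
  then show ?case
    by (intro exI[of _ "\<lambda>x. Im v"] conjI plane_poly.const) auto
next
  case (add p q)
  then obtain dp dq where "plane_poly dp" "plane_poly dq"
    "\<And>x. ((\<lambda>t. p (x + of_real t * v)) has_real_derivative dp x) (at 0)"
    "\<And>x. ((\<lambda>t. q (x + of_real t * v)) has_real_derivative dq x) (at 0)" by blast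
  then show ?case
    by (intro exI[of _ "\<lambda>x. dp x + dq x"] conjI plane_poly.add allI) (auto intro!: DERIV_add)
next
  case (mult p q)
  then obtain dp dq where "plane_poly dp" "plane_poly dq"
    and d: "\<And>x. ((\<lambda>t. p (x + of_real t * v)) has_real_derivative dp x) (at 0)"
           "\<And>x. ((\<lambda>t. q (x + of_real t * v)) has_real_derivative dq x) (at 0)" by blast
  have "((\<lambda>t. p (x + of_real t * v) * q (x + of_real t * v)) has_real_derivative
          dp x * q x + dq x * p x) (at 0)" for x
    using DERIV_mult[OF d(1)[of x] d(2)[of x]] by simp
  moreover have "plane_poly (\<lambda>x. dp x * q x + dq x * p x)"
    using \<open>plane_poly dp\<close> \<open>plane_poly dq\<close> mult.hyps by (intro plane_poly.add plane_poly.mult)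
  ultimately show ?case by blast
qed

lemma DERIV_chain_nonneg_inner:
  assumes "(f has_real_derivative f') (at (g a) within {0..})"
    and "(g has_real_derivative g') (at a)" and "\<And>s. g s \<ge> 0"
  shows "((\<lambda>t. f (g t)) has_real_derivative f' * g') (at a)"
proof -
  have "(f has_real_derivative f') (at (g a) within range g)"
    by (rule has_field_derivative_subset[OF assms(1)]) (auto intro: assms(3))
  from DERIV_image_chain[OF this assms(2)] show ?thesis
    by (simp add: o_def)
qed

text \<open>Given profiles g 0, ..., g k on [0,\<infinity>) with each the derivative
  of the previous one, radial_comb g k m h says that h is a finite sum of terms
  p(x) g_j(|x|^2) with p a plane polynomial and j + m \<le> k; such an
  h can be differentiated m more times within the class.\<close>
inductive radial_comb :: "(nat \<Rightarrow> real \<Rightarrow> real) \<Rightarrow> nat \<Rightarrow> nat \<Rightarrow> (complex \<Rightarrow> real) \<Rightarrow> bool"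
  for g :: "nat \<Rightarrow> real \<Rightarrow> real" and k :: nat where
  radial_term: "plane_poly p \<Longrightarrow> j + m \<le> k \<Longrightarrow> radial_comb g k m (\<lambda>x. p x * g j (norm_sq x))"
| radial_sum: "radial_comb g k m h1 \<Longrightarrow> radial_comb g k m h2 \<Longrightarrow> radial_comb g k m (\<lambda>x. h1 x + h2 x)"

lemma radial_comb_continuous:
  assumes "radial_comb g k m h" and "\<And>j. j \<le> k \<Longrightarrow> continuous_on {0..} (g j)"
  shows "continuous_on UNIV h"
  using assms(1)
proof (induction rule: radial_comb.induct)
  case (radial_term p j m)
  have "continuous_on UNIV (\<lambda>x. g j (norm_sq x))"
    by (rule continuous_on_compose2[OF assms(2)[of j]])
       (use radial_term in \<open>auto simp: norm_sq_def intro!: continuous_intros\<close>)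
  then show ?case using plane_poly_continuous[OF radial_term(1)] by (intro continuous_intros)
next
  case (radial_sum m h1 h2)
  then show ?case by (intro continuous_intros)
qed

text \<open>Differentiating a term p(x) g_j(|x|^2) in direction v gives
  p'(x) g_j(|x|^2) + 2 \<langle>x,v\<rangle> p(x) g_(j+1)(|x|^2), which lies one level lower.\<close>
lemma radial_comb_directional_deriv:
  assumes "radial_comb g k (Suc m) h"
    and D: "\<And>j r. j < k \<Longrightarrow> r \<ge> 0 \<Longrightarrow> (g j has_real_derivative g (Suc j) r) (at r within {0..})"
  shows "\<exists>h'. radial_comb g k m h' \<and> (\<forall>x. ((\<lambda>t. h (x + of_real t * v)) has_real_derivative h' x) (at 0))"
proof -
  have "radial_comb g k l h \<Longrightarrow> l = Suc m \<Longrightarrow>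
    \<exists>h'. radial_comb g k m h' \<and> (\<forall>x. ((\<lambda>t. h (x + of_real t * v)) has_real_derivative h' x) (at 0))"
    for l h
  proof (induction arbitrary: m rule: radial_comb.induct)
    case (radial_term p j l)
    obtain dp where dp: "plane_poly dp"
      "\<And>x. ((\<lambda>t. p (x + of_real t * v)) has_real_derivative dp x) (at 0)"
      using plane_poly_directional_deriv[OF radial_term(1)] by blast
    define q where "q = (\<lambda>x. p x * (2 * (Re x * Re v + Im x * Im v)))"
    have q: "plane_poly q"
      unfolding q_def
      by (intro plane_poly.mult plane_poly.add plane_poly.const plane_poly.re plane_poly.im radial_term(1))
    have "radial_comb g k m (\<lambda>x. dp x * g j (norm_sq x) + q x * g (Suc j) (norm_sq x))"
      using radial_term by (intro radial_comb.radial_sum radial_comb.radial_term dp(1) q) auto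
    moreover have "((\<lambda>t. p (x + of_real t * v) * g j (norm_sq (x + of_real t * v))) has_real_derivative
        dp x * g j (norm_sq x) + q x * g (Suc j) (norm_sq x)) (at 0)" for x
    proof -
      have "((\<lambda>t. g j (norm_sq (x + of_real t * v))) has_real_derivative
              g (Suc j) (norm_sq x) * (2 * (Re x * Re v + Im x * Im v))) (at 0)"
        using DERIV_chain_nonneg_inner[OF _ norm_sq_directional_deriv norm_sq_nonneg]
          D[of j "norm_sq x"] radial_term norm_sq_nonneg by simp
      from DERIV_mult[OF dp(2)[of x] this] show ?thesis
        by (simp add: q_def algebra_simps)
    qed
    ultimately show ?case by blast
  next
    case (radial_sum l h1 h2)
    then obtain h1' h2' where "radial_comb g k m h1'" "radial_comb g k m h2'"
      "\<And>x. ((\<lambda>t. h1 (x + of_real t * v)) has_real_derivative h1' x) (at 0)"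
      "\<And>x. ((\<lambda>t. h2 (x + of_real t * v)) has_real_derivative h2' x) (at 0)" by blast
    then show ?case
      by (intro exI[of _ "\<lambda>x. h1' x + h2' x"] conjI radial_comb.radial_sum allI) (auto intro!: DERIV_add)
  qed
  then show ?thesis using assms(1) by blast
qed

lemma iter_pd_radial_comb:
  assumes D: "\<And>j r. j < k \<Longrightarrow> r \<ge> 0 \<Longrightarrow> (g j has_real_derivative g (Suc j) r) (at r within {0..})"
    and "length vs \<le> k"
  shows "radial_comb g k (k - length vs) (iter_pd vs (\<lambda>x. g 0 (norm_sq x)))"
  using assms(2)
proof (induction vs)
  case Nil
  have "radial_comb g k k (\<lambda>x. (\<lambda>x. 1) x * g 0 (norm_sq x))"
    by (intro radial_comb.radial_term plane_poly.const) simp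
  then show ?case by simp
next
  case (Cons v vs)
  then have "radial_comb g k (Suc (k - length (v # vs))) (iter_pd vs (\<lambda>x. g 0 (norm_sq x)))"
    by (simp add: Suc_diff_Suc)
  then obtain h' where h': "radial_comb g k (k - length (v # vs)) h'"
    "\<And>x. ((\<lambda>t. iter_pd vs (\<lambda>x. g 0 (norm_sq x)) (x + of_real t * v)) has_real_derivative h' x) (at 0)"
    using radial_comb_directional_deriv[where g=g and k=k, OF _ D] by blast
  have "iter_pd (v # vs) (\<lambda>x. g 0 (norm_sq x)) = h'"
    by (rule ext) (simp add: DERIV_imp_deriv[OF h'(2)])
  then show ?case using h'(1) by simp
qed

text \<open>Radial functions with a C^k profile in the squared radius are C^k on the
  whole plane: g_0(|x|^2) is smooth even at the origin, where |x| is not.\<close>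
theorem Ck_on_radial:
  assumes D: "\<And>j r. j < k \<Longrightarrow> r \<ge> 0 \<Longrightarrow> (g j has_real_derivative g (Suc j) r) (at r within {0..})"
    and C: "\<And>j. j \<le> k \<Longrightarrow> continuous_on {0..} (g j)"
  shows "Ck_on k UNIV (\<lambda>x. g 0 (norm_sq x))"
  unfolding Ck_on_def
proof (intro conjI allI impI)
  fix vs v x assume vs: "length vs < k \<and> set (v # vs) \<subseteq> {1, \<i>} \<and> x \<in> (UNIV :: complex set)"
  then have "radial_comb g k (Suc (k - Suc (length vs))) (iter_pd vs (\<lambda>x. g 0 (norm_sq x)))"
    using iter_pd_radial_comb[where g=g and k=k, OF D, of vs] by (simp add: Suc_diff_Suc)
  then obtain h' where
    "((\<lambda>t. iter_pd vs (\<lambda>x. g 0 (norm_sq x)) (x + of_real t * v)) has_real_derivative h' x) (at 0)"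
    using radial_comb_directional_deriv[where g=g and k=k, OF _ D] by blast
  then show "(\<lambda>t. iter_pd vs (\<lambda>x. g 0 (norm_sq x)) (x + of_real t * v)) differentiable (at 0)"
    using real_differentiable_def by blast
next
  fix vs :: "complex list" assume "length vs \<le> k \<and> set vs \<subseteq> {1, \<i>}"
  then show "continuous_on UNIV (iter_pd vs (\<lambda>x. g 0 (norm_sq x)))"
    using radial_comb_continuous[OF iter_pd_radial_comb[where g=g and k=k, OF D] C] by blast
qed simp

section \<open>The substituted kernel and its integral\<close>

text \<open>The substitution s = (u/(1-u))^2 maps (0,1) onto (0,\<infinity>). Under it the density
  s^n/(1+s^n)^2 ds becomes subst_weight n u du and 1/(r+s) becomes resolvent r u, so the
  integrand of Ffac becomes the kernel below, which is bounded and jointly continuous on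
  [0,\<infinity>) \<times> [0,1] even at r = 0.\<close>
definition subst_den :: "nat \<Rightarrow> real \<Rightarrow> real" where
  "subst_den n u = (1-u)^(2*n) + u^(2*n)"

definition subst_weight :: "nat \<Rightarrow> real \<Rightarrow> real" where
  "subst_weight n u = 2 * u^(2*n+1) * (1-u)^(2*n-3) / (subst_den n u)^2"

definition resolvent :: "real \<Rightarrow> real \<Rightarrow> real" where
  "resolvent r u = (1-u)^2 / (r*(1-u)^2 + u^2)"

definition kernel :: "nat \<Rightarrow> nat \<Rightarrow> real \<Rightarrow> real \<Rightarrow> real" where
  "kernel n m r u = subst_weight n u * resolvent r u ^ m"

text \<open>kernel_integral n m r is the integral over s \<in> (0,\<infinity>) of s^n/(1+s^n)^2/(r+s)^m;
  in particular Ffac n \<rho> = pi n^2 kernel_integral n 2 (\<rho>^2).\<close>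
definition kernel_integral :: "nat \<Rightarrow> nat \<Rightarrow> real \<Rightarrow> real" where
  "kernel_integral n m r = integral {0..1} (kernel n m r)"

lemma subst_den_pos: "subst_den n u > 0"
proof (cases "u = 0")
  case True
  then show ?thesis by (cases n) (simp_all add: subst_den_def)
next
  case False
  then have "u^(2*n) > 0" by (simp add: power_mult)
  moreover have "(1-u)^(2*n) \<ge> 0" by (simp add: power_mult)
  ultimately show ?thesis unfolding subst_den_def by linarith
qed

text \<open>One of u, 1-u is at least 1/2, so the denominator stays away from zero.\<close>
lemma subst_den_lower_bound:
  assumes "0 \<le> u" "u \<le> 1"
  shows "subst_den n u \<ge> (1/2)^(2*n)"
proof (cases "u \<ge> 1/2")
  case True
  then have "u^(2*n) \<ge> (1/2)^(2*n)" by (intro power_mono) auto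
  moreover have "(1-u)^(2*n) \<ge> 0" using assms by simp
  ultimately show ?thesis unfolding subst_den_def by linarith
next
  case False
  then have "(1-u)^(2*n) \<ge> (1/2)^(2*n)" by (intro power_mono) auto
  moreover have "u^(2*n) \<ge> 0" using assms by simp
  ultimately show ?thesis unfolding subst_den_def by linarith
qed

lemma resolvent_den_pos: "(r::real) \<ge> 0 \<Longrightarrow> u \<noteq> 0 \<Longrightarrow> r*(1-u)^2 + u^2 > 0"
  by (simp add: add_nonneg_pos)

lemma kernel_at_zero [simp]: "kernel n m r 0 = 0"
  by (simp add: kernel_def subst_weight_def)

lemma kernel_nonneg:
  assumes "r \<ge> 0" "0 \<le> u" "u \<le> 1"
  shows "kernel n m r u \<ge> 0"
  using assms by (simp add: kernel_def subst_weight_def resolvent_def)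

text \<open>Near u = 0 the kernel is O(u) uniformly in r \<ge> 0 as long as m \<le> n: the factor
  u^(2n+1) in the weight beats the blow-up resolvent r u \<le> 1/u^2 at r = 0. This is where
  the hypothesis n \<ge> 5 enters, since three derivatives in r require m = 5.\<close>
lemma kernel_bound:
  assumes r: "r \<ge> 0" and u: "0 \<le> u" "u \<le> 1" and mn: "m \<le> n"
  shows "\<bar>kernel n m r u\<bar> \<le> 2 * 2^(4*n) * u"
proof (cases "u = 0")
  case True
  then show ?thesis by simp
next
  case False
  then have u0: "u > 0" using u by simp
  have qp: "r*(1-u)^2 + u^2 > 0" using resolvent_den_pos[OF r False] .
  have B: "0 \<le> (1-u)^(2*n-3)" "(1-u)^(2*n-3) \<le> 1"
    using u by (auto intro: power_le_one)
  have w0: "resolvent r u \<ge> 0" using qp by (simp add: resolvent_def)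
  have "resolvent r u \<le> 1/u^2"
    unfolding resolvent_def by (rule frac_le) (use u qp u0 r in \<open>auto intro: power_le_one\<close>)
  then have W: "resolvent r u ^ m \<le> (1/u^2)^m" by (rule power_mono[OF _ w0])
  have "(1/2::real)^(4*n) \<le> subst_den n u ^ 2"
    using power_mono[OF subst_den_lower_bound[OF u, of n], of 2]
    by (simp add: power_mult[symmetric] mult.commute)
  then have "1 / subst_den n u ^ 2 \<le> 1 / (1/2::real)^(4*n)"
    by (rule divide_left_mono) (use subst_den_pos[of n u] in \<open>auto intro!: mult_pos_pos\<close>)
  then have E: "1 / subst_den n u ^ 2 \<le> 2^(4*n)"
    by (simp add: power_one_over)
  have "kernel n m r u = 2 * u^(2*n+1) * ((1-u)^(2*n-3) * (1 / subst_den n u ^ 2) * resolvent r u ^ m)"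
    by (simp add: kernel_def subst_weight_def)
  also have "\<dots> \<le> 2 * u^(2*n+1) * (1 * 2^(4*n) * (1/u^2)^m)"
    using B E W w0 u by (intro mult_left_mono mult_mono) auto
  also have "\<dots> = 2 * 2^(4*n) * u^(2*n+1-2*m)"
    using u0 mn by (simp add: power_one_over power_mult power_diff)
  also have "u^(2*n+1-2*m) \<le> u^1"
    by (rule power_decreasing) (use mn u in auto)
  finally show ?thesis
    using kernel_nonneg[OF r u] by (simp add: mult_left_mono)
qed

lemma kernel_continuous:
  assumes "m \<le> n"
  shows "continuous_on ({0..} \<times> {0..1}) (\<lambda>p. kernel n m (fst p) (snd p))"
  unfolding continuous_on_eq_continuous_within
proof
  fix p :: "real \<times> real" assume pS: "p \<in> {0..} \<times> {0..1}"
  obtain r u where p: "p = (r, u)" by (cases p)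
  show "continuous (at p within {0..} \<times> {0..1}) (\<lambda>p. kernel n m (fst p) (snd p))"
  proof (cases "r = 0 \<and> u = 0")
    case False
    then have "r*(1-u)^2 + u^2 > 0"
      using pS p by (cases "u = 0") (auto simp: resolvent_den_pos)
    then have "isCont (\<lambda>p. kernel n m (fst p) (snd p)) (r, u)"
      unfolding kernel_def subst_weight_def resolvent_def
      using subst_den_pos[of n u] by (intro continuous_intros) (auto simp: subst_den_def)
    then show ?thesis using p by (simp add: continuous_at_imp_continuous_at_within)
  next
    case True
    text \<open>At the corner (0,0) continuity follows from the uniform O(u) bound.\<close>
    have "((\<lambda>p. kernel n m (fst p) (snd p)) \<longlongrightarrow> 0) (at p within {0..} \<times> {0..1})"
    proof (rule Lim_null_comparison)
      show "\<forall>\<^sub>F x in at p within {0..} \<times> {0..1}. norm (kernel n m (fst x) (snd x)) \<le> 2 * 2^(4*n) * snd x"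
        unfolding eventually_at_filter
        by (rule always_eventually) (auto intro!: kernel_bound assms)
      have "((\<lambda>x. 2 * 2^(4*n) * snd x) \<longlongrightarrow> 2 * 2^(4*n) * snd p) (at p within {0..} \<times> {0..1})"
        by (intro tendsto_intros)
      then show "((\<lambda>x. 2 * 2^(4*n) * snd x) \<longlongrightarrow> 0) (at p within {0..} \<times> {0..1})"
        using p True by simp
    qed
    then show ?thesis using p True by (simp add: continuous_within)
  qed
qed

lemma kernel_continuous_in_u:
  assumes "m \<le> n" "r \<ge> 0"
  shows "continuous_on {0..1} (kernel n m r)"
proof -
  have "continuous_on {0..1} (\<lambda>u. (\<lambda>p. kernel n m (fst p) (snd p)) (r, u))"
    by (rule continuous_on_compose2[OF kernel_continuous[OF assms(1)]])
       (use assms in \<open>auto intro!: continuous_intros\<close>)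
  then show ?thesis by simp
qed

text \<open>Since d/dr 1/(r+s) = -1/(r+s)^2, differentiating the kernel in r raises the power of
  the resolvent.\<close>
lemma kernel_deriv:
  assumes r: "r \<ge> 0" and u: "0 \<le> u" and m: "m \<ge> 1"
  shows "((\<lambda>r. kernel n m r u) has_real_derivative -(real m) * kernel n (Suc m) r u) (at r within {0..})"
proof (cases "u = 0")
  case True
  then show ?thesis by simp
next
  case False
  have qp: "r*(1-u)^2 + u^2 > 0" using resolvent_den_pos[OF r False] .
  have dw: "((\<lambda>r. resolvent r u) has_real_derivative -((resolvent r u)^2)) (at r)"
    unfolding resolvent_def using qp
    by (auto intro!: derivative_eq_intros simp: power2_eq_square divide_simps)
  have "((\<lambda>r. subst_weight n u * resolvent r u ^ m) has_real_derivative
          subst_weight n u * (real m * resolvent r u ^ (m - 1) * -((resolvent r u)^2))) (at r)"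
    using DERIV_cmult[OF DERIV_power[OF dw, of m], of "subst_weight n u"] by (simp add: mult_ac)
  moreover have "subst_weight n u * (real m * resolvent r u ^ (m - 1) * -((resolvent r u)^2))
      = -(real m) * (subst_weight n u * resolvent r u ^ Suc m)"
  proof -
    have "resolvent r u ^ (m - 1) * resolvent r u ^ 2 = resolvent r u ^ Suc m"
      using m by (simp add: power_add[symmetric])
    then show ?thesis by (simp add: algebra_simps)
  qed
  ultimately have "((\<lambda>r. kernel n m r u) has_real_derivative -(real m) * kernel n (Suc m) r u) (at r)"
    unfolding kernel_def by (rule DERIV_cong)
  then show ?thesis by (rule has_field_derivative_at_within)
qed

lemma kernel_integral_continuous:
  assumes "m \<le> n"
  shows "continuous_on {0..} (kernel_integral n m)"
proof -
  have "continuous_on {0..} (\<lambda>x. integral (cbox 0 1) (\<lambda>u. kernel n m x u))"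
    using kernel_continuous[OF assms] by (intro integral_continuous_on_param) (simp add: case_prod_beta')
  then show ?thesis by (simp add: kernel_integral_def[abs_def])
qed

text \<open>Differentiation under the integral sign (Leibniz rule), valid up to r = 0 thanks to
  the joint continuity of the differentiated kernel.\<close>
lemma kernel_integral_deriv:
  assumes "Suc m \<le> n" "1 \<le> m" "r \<ge> 0"
  shows "(kernel_integral n m has_real_derivative -(real m) * kernel_integral n (Suc m) r) (at r within {0..})"
proof -
  have "((\<lambda>x. integral (cbox 0 1) (\<lambda>u. kernel n m x u)) has_real_derivative
          integral (cbox 0 1) (\<lambda>u. -(real m) * kernel n (Suc m) r u)) (at r within {0..})"
  proof (rule leibniz_rule_field_derivative)
    fix x t :: real assume "x \<in> {0..}" "t \<in> cbox 0 1"
    then show "((\<lambda>x. kernel n m x t) has_real_derivative -(real m) * kernel n (Suc m) x t) (at x within {0..})"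
      using assms by (intro kernel_deriv) auto
  next
    fix x :: real assume "x \<in> {0..}"
    then show "(\<lambda>u. kernel n m x u) integrable_on cbox 0 1"
      using assms kernel_continuous_in_u[of m n x] by (auto intro!: integrable_continuous_real)
  next
    have "continuous_on ({0..} \<times> cbox 0 1) (\<lambda>p. -(real m) * kernel n (Suc m) (fst p) (snd p))"
      using kernel_continuous[OF assms(1)] by (auto intro!: continuous_intros)
    then show "continuous_on ({0..} \<times> cbox 0 1) (\<lambda>(x, t). -(real m) * kernel n (Suc m) x t)"
      by (simp add: case_prod_beta')
  qed (use assms in auto)
  then show ?thesis by (simp add: kernel_integral_def[abs_def])
qed

text \<open>Positivity of the conformal factor: the kernel is nonnegative, continuous and
  positive at u = 1/2.\<close>
lemma kernel_integral_pos:
  assumes "m \<le> n" "r \<ge> 0"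
  shows "kernel_integral n m r > 0"
proof -
  have cont: "continuous_on {0..1} (kernel n m r)"
    using kernel_continuous_in_u[OF assms] .
  have nonneg: "\<And>u. u \<in> {0..1} \<Longrightarrow> kernel n m r u \<ge> 0"
    using kernel_nonneg[OF assms(2)] by auto
  have "subst_weight n (1/2) > 0"
    unfolding subst_weight_def using subst_den_pos[of n "1/2"] by simp
  moreover have "resolvent r (1/2) > 0"
    using resolvent_den_pos[OF assms(2), of "1/2"] by (simp add: resolvent_def)
  ultimately have "kernel n m r (1/2) \<noteq> 0"
    by (simp add: kernel_def)
  then have "integral {0..1} (kernel n m r) \<noteq> 0"
    using integral_eq_0_iff[OF cont _ nonneg] by auto
  moreover have "integral {0..1} (kernel n m r) \<ge> 0"
    using integral_nonneg[OF integrable_continuous_real[OF cont]] nonneg by blast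
  ultimately show ?thesis by (simp add: kernel_integral_def)
qed

section \<open>The change of variables s = (u/(1-u))^2\<close>

lemma filterlim_subst_at_left_1: "filterlim (\<lambda>x::real. (x/(1-x))^2) at_top (at_left 1)"
proof -
  have "filterlim (\<lambda>x::real. 1 - x) (at_right 0) (at_left 1)"
    unfolding filterlim_at by (auto simp: eventually_at_filter intro!: tendsto_eq_intros)
  then have "filterlim (\<lambda>x::real. inverse (1 - x)) at_top (at_left 1)"
    by (rule filterlim_compose[OF filterlim_inverse_at_top_right])
  then have "filterlim (\<lambda>x::real. x * inverse (1 - x)) at_top (at_left 1)"
    by (rule filterlim_tendsto_pos_mult_at_top[rotated 2]) (auto intro!: tendsto_eq_intros)
  then have "filterlim (\<lambda>x::real. (x * inverse (1 - x))^2) at_top (at_left 1)"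
    by (rule filterlim_pow_at_top[rotated]) simp
  then show ?thesis by (simp add: field_simps)
qed

lemma integral_substitution_unit_interval:
  fixes f h :: "real \<Rightarrow> real"
  assumes cf: "continuous_on {0<..} f" and nn: "\<And>s. s > 0 \<Longrightarrow> f s \<ge> 0"
    and ch: "continuous_on {0..1} h"
    and eq: "\<And>u. 0 < u \<Longrightarrow> u < 1 \<Longrightarrow> h u = f ((u/(1-u))^2) * (2*u/(1-u)^3)"
  shows "integral {0<..} f = integral {0..1} h"
proof -
  define g where "g = (\<lambda>u::real. (u/(1-u))^2)"
  define g' where "g' = (\<lambda>u::real. 2*u/(1-u)^3)"
  have hint: "set_integrable lborel {0..1} h"
    by (rule borel_integrable_atLeastAtMost'[OF ch])
  have intg: "set_integrable lborel (einterval 0 1) (\<lambda>x. f (g x) * g' x)"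
  proof -
    have "set_integrable lborel {0<..<1} h"
      by (rule set_integrable_subset[OF hint]) auto
    moreover have "set_integrable lborel {0<..<1} h = set_integrable lborel {0<..<1} (\<lambda>x. f (g x) * g' x)"
      by (rule set_integrable_cong) (auto simp: eq g_def g'_def)
    ultimately show ?thesis by (simp add: zero_ereal_def one_ereal_def)
  qed
  have gpos: "0 < x \<Longrightarrow> x < 1 \<Longrightarrow> g x > 0" for x by (simp add: g_def)
  have d1: "\<And>x. 0 < ereal x \<Longrightarrow> ereal x < 1 \<Longrightarrow> (g has_real_derivative g' x) (at x)"
    unfolding g_def g'_def
    by (auto simp: one_ereal_def zero_ereal_def intro!: derivative_eq_intros)
       (auto simp: field_simps power2_eq_square power3_eq_cube)
  have d2: "\<And>x. 0 < ereal x \<Longrightarrow> ereal x < 1 \<Longrightarrow> isCont f (g x)"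
    using gpos cf by (auto simp: one_ereal_def zero_ereal_def continuous_on_eq_continuous_at)
  have d3: "\<And>x. 0 < ereal x \<Longrightarrow> ereal x < 1 \<Longrightarrow> isCont g' x"
    unfolding g'_def by (auto simp: one_ereal_def intro!: continuous_intros)
  have d4: "\<And>x. 0 < ereal x \<Longrightarrow> ereal x < 1 \<Longrightarrow> 0 \<le> f (g x)"
    using gpos nn by (auto simp: one_ereal_def zero_ereal_def)
  have d5: "\<And>x. 0 \<le> ereal x \<Longrightarrow> ereal x \<le> 1 \<Longrightarrow> 0 \<le> g' x"
    unfolding g'_def by (auto simp: one_ereal_def zero_ereal_def)
  have d6: "((ereal \<circ> g \<circ> real_of_ereal) \<longlongrightarrow> 0) (at_right 0)"
    unfolding g_def by (auto simp: zero_ereal_def ereal_tendsto_simps intro!: tendsto_eq_intros)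
  have d7: "((ereal \<circ> g \<circ> real_of_ereal) \<longlongrightarrow> \<infinity>) (at_left 1)"
    unfolding g_def using filterlim_subst_at_left_1 by (auto simp: one_ereal_def ereal_tendsto_simps)
  note subst = interval_integral_substitution_nonneg[of 0 1 g g' f, OF _ d1 d2 d3 d4 d5 d6 d7 intg]
  have "(LBINT x=0..\<infinity>. f x) = integral {0<..} f"
    using interval_integral_eq_integral'[of 0 \<infinity> f] subst(1) by (simp add: zero_ereal_def)
  moreover have "(LBINT x=0..1. f (g x) * g' x) = integral {0..1} h"
  proof -
    have "(LBINT x=0..1. f (g x) * g' x) = integral (einterval 0 1) (\<lambda>x. f (g x) * g' x)"
      by (rule interval_integral_eq_integral'[OF _ intg]) simp
    also have "\<dots> = integral {0<..<1} h"
      by (simp add: zero_ereal_def one_ereal_def) (rule integral_cong, simp add: eq g_def g'_def)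
    also have "\<dots> = integral {0..1} h"
      by (rule integral_subset_negligible) (auto intro: negligible_subset[of "{0,1}"])
    finally show ?thesis .
  qed
  ultimately show ?thesis using subst(2) by simp
qed

text \<open>The reflection u \<mapsto> 1-u of the unit interval; under the substitution above it
  corresponds to the inversion s \<mapsto> 1/s.\<close>
lemma integral_reflect_unit_interval:
  fixes f :: "real \<Rightarrow> real"
  shows "integral {0..1} (\<lambda>u. f (1-u)) = integral {0..1::real} f"
proof -
  have "integral {0..1} (\<lambda>u. f (1-u)) = integral {-0..-(-1)} (\<lambda>x. f ((-x) + 1))"
    by (simp add: algebra_simps)
  also have "\<dots> = integral {-1..0::real} (\<lambda>x. f (x + 1))"
    using Henstock_Kurzweil_Integration.integral_reflect_real[where f="\<lambda>x. f (x + 1)" and a="-1" and b=0] by simp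
  also have "\<dots> = integral {0..1} f"
    using integral_shift_real_ivl[of 0 1 1 f] by simp
  finally show ?thesis .
qed

lemma kernel_substitution:
  fixes u r :: real
  assumes u: "0 < u" "u < 1" and r: "r \<ge> 0" and n: "n \<ge> 2"
  shows "kernel n 2 r u =
    ((u/(1-u))^2)^n / (1 + ((u/(1-u))^2)^n)^2 / (r + (u/(1-u))^2)^2 * (2*u/(1-u)^3)"
proof -
  define a b where "a = u" and "b = 1 - u"
  define A B c where "A = a^(2*n)" and "B = b^(2*n)" and "c = b^(2*n-3)"
  have pos: "a > 0" "b > 0" "A > 0" "B > 0" "r*b^2 + a^2 > 0"
    using u r by (auto simp: a_def b_def A_def B_def add_nonneg_pos)
  have cB: "c * b^3 = B"
    using n by (simp add: c_def B_def power_add[symmetric])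
  have "kernel n 2 r u = 2 * (a*A) * c / (B + A)^2 * (b^2/(r*b^2+a^2))^2"
    by (simp add: kernel_def subst_weight_def subst_den_def resolvent_def a_def b_def A_def B_def c_def)
  also have "\<dots> = (A/B) / (1 + A/B)^2 / (r + a^2/b^2)^2 * (2*a/b^3)"
  proof -
    have e1: "1 + A/B = (B+A)/B" using pos by (simp add: field_simps)
    have e2: "r + a^2/b^2 = (r*b^2+a^2)/b^2" using pos by (simp add: field_simps)
    show ?thesis unfolding e1 e2 using pos
      by (simp add: field_simps cB[symmetric]) (simp add: divide_simps, simp add: algebra_simps numeral_eq_Suc)
  qed
  also have "\<dots> = ((u/(1-u))^2)^n / (1 + ((u/(1-u))^2)^n)^2 / (r + (u/(1-u))^2)^2 * (2*u/(1-u)^3)"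
    by (simp add: a_def b_def A_def B_def power_divide power_mult)
  finally show ?thesis .
qed

lemma kernel_reflected_substitution:
  fixes u r :: real
  assumes u: "0 < u" "u < 1" and r: "r > 0" and n: "n \<ge> 2"
  shows "kernel n 2 r (1-u) =
    ((u/(1-u))^2)^n / (1 + ((u/(1-u))^2)^n)^2 / (1/r + (u/(1-u))^2)^2 / r^2 * (2*u/(1-u)^3)"
proof -
  define a b where "a = u" and "b = 1 - u"
  define A B c where "A = a^(2*n)" and "B = b^(2*n)" and "c = a^(2*n-3)"
  have pos: "a > 0" "b > 0" "A > 0" "B > 0" "r*a^2 + b^2 > 0"
    using u r by (auto simp: a_def b_def A_def B_def add_pos_pos)
  have cA: "c * a^3 = A"
    using n by (simp add: c_def A_def power_add[symmetric])
  have "kernel n 2 r (1-u) = 2 * (b*B) * c / (A + B)^2 * (a^2/(r*a^2+b^2))^2"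
    by (simp add: kernel_def subst_weight_def subst_den_def resolvent_def a_def b_def A_def B_def c_def)
  also have "\<dots> = (A/B) / (1 + A/B)^2 / (1/r + a^2/b^2)^2 / r^2 * (2*a/b^3)"
  proof -
    have e1: "1 + A/B = (B+A)/B" using pos by (simp add: field_simps)
    have e2: "1/r + a^2/b^2 = (r*a^2+b^2)/(r*b^2)" using pos r by (simp add: field_simps)
    show ?thesis unfolding e1 e2 using pos r
      by (simp add: field_simps cA[symmetric]) (simp add: power2_eq_square power3_eq_cube power4_eq_xxxx mult_ac)
  qed
  also have "\<dots> = ((u/(1-u))^2)^n / (1 + ((u/(1-u))^2)^n)^2 / (1/r + (u/(1-u))^2)^2 / r^2 * (2*u/(1-u)^3)"
    by (simp add: a_def b_def A_def B_def power_divide power_mult)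
  finally show ?thesis .
qed

lemma Ffac_integrand_continuous:
  assumes "c \<ge> 0"
  shows "continuous_on {0<..} (\<lambda>s::real. s^n/(1+s^n)^2/(c+s)^2)"
proof -
  have "(1+s^n)^2 \<noteq> 0" "(c+s)^2 \<noteq> 0" if "s > 0" for s :: real
  proof -
    have "1 + s^n > 0" using zero_less_power[OF that, of n] by linarith
    moreover have "c + s > 0" using that assms by linarith
    ultimately show "(1+s^n)^2 \<noteq> 0" "(c+s)^2 \<noteq> 0" by simp_all
  qed
  then show ?thesis by (auto intro!: continuous_intros)
qed

lemma Ffac_eq_kernel_integral:
  assumes n: "n \<ge> 2" and \<rho>: "\<rho> > 0"
  shows "Ffac n \<rho> = pi * (real n)^2 * kernel_integral n 2 (\<rho>^2)"
proof -
  have "integral {0<..} (\<lambda>s. s^n/(1+s^n)^2/(\<rho>^2+s)^2) = integral {0..1} (kernel n 2 (\<rho>^2))"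
  proof (rule integral_substitution_unit_interval)
    show "continuous_on {0<..} (\<lambda>s. s^n/(1+s^n)^2/(\<rho>^2+s)^2)"
      by (rule Ffac_integrand_continuous) simp
    show "continuous_on {0..1} (kernel n 2 (\<rho>^2))"
      using kernel_continuous_in_u[of 2 n "\<rho>^2"] n by simp
    show "kernel n 2 (\<rho>^2) u = ((u/(1-u))^2)^n/(1+((u/(1-u))^2)^n)^2/(\<rho>^2+(u/(1-u))^2)^2 * (2*u/(1-u)^3)"
      if "0 < u" "u < 1" for u
      using kernel_substitution[OF that _ n] by simp
  qed simp
  then show ?thesis by (simp add: Ffac_def kernel_integral_def)
qed

text \<open>The inverted conformal factor Ffac(1/\<rho>)/\<rho>^4 is the same function of \<rho>^2: under the
  substitution the inversion s \<mapsto> 1/s becomes the reflection u \<mapsto> 1-u. This is the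
  invariance of the metric under a \<mapsto> 1/a.\<close>
lemma Ffac_inversion_eq_kernel_integral:
  assumes n: "n \<ge> 2" and \<rho>: "\<rho> > 0"
  shows "Ffac n (1/\<rho>) / \<rho>^4 = pi * (real n)^2 * kernel_integral n 2 (\<rho>^2)"
proof -
  let ?f = "\<lambda>s. s^n/(1+s^n)^2/(1/\<rho>^2+s)^2"
  have "integral {0<..} ?f / (\<rho>^2)^2 = integral {0<..} (\<lambda>s. ?f s / (\<rho>^2)^2)"
    by (rule integral_divide[symmetric])
  also have "\<dots> = integral {0..1} (\<lambda>u. kernel n 2 (\<rho>^2) (1-u))"
  proof (rule integral_substitution_unit_interval)
    show "continuous_on {0<..} (\<lambda>s. ?f s / (\<rho>^2)^2)"
      by (intro continuous_on_divide Ffac_integrand_continuous continuous_on_const) (use \<rho> in auto)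
    show "continuous_on {0..1} (\<lambda>u. kernel n 2 (\<rho>^2) (1-u))"
      by (rule continuous_on_compose2[OF kernel_continuous_in_u[of 2 n "\<rho>^2"]])
         (use n in \<open>auto intro!: continuous_intros\<close>)
    show "kernel n 2 (\<rho>^2) (1-u) = ?f ((u/(1-u))^2) / (\<rho>^2)^2 * (2*u/(1-u)^3)"
      if "0 < u" "u < 1" for u
      using kernel_reflected_substitution[OF that _ n, of "\<rho>^2"] \<rho> by simp
  qed simp
  also have "\<dots> = integral {0..1} (kernel n 2 (\<rho>^2))"
    by (rule integral_reflect_unit_interval)
  finally have "integral {0<..} ?f / (\<rho>^2)^2 = integral {0..1} (kernel n 2 (\<rho>^2))" .
  moreover have "Ffac n (1/\<rho>) / \<rho>^4 = pi * (real n)^2 * (integral {0<..} ?f / (\<rho>^2)^2)"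
    by (simp add: Ffac_def power_one_over power_mult[symmetric])
  ultimately show ?thesis by (simp add: kernel_integral_def)
qed

text \<open>profile n j is the j-th derivative in r of pi n^2 kernel_integral n 2 r.\<close>
definition profile :: "nat \<Rightarrow> nat \<Rightarrow> real \<Rightarrow> real" where
  "profile n j r = (-1)^j * fact (j+1) * pi * (real n)^2 * kernel_integral n (j+2) r"

lemma profile_deriv:
  assumes "j + 3 \<le> n" "r \<ge> 0"
  shows "(profile n j has_real_derivative profile n (Suc j) r) (at r within {0..})"
proof -
  have "(kernel_integral n (j+2) has_real_derivative -(real (j+2)) * kernel_integral n (Suc (j+2)) r)
          (at r within {0..})"
    using assms by (intro kernel_integral_deriv) auto
  from DERIV_cmult[OF this, of "(-1)^j * fact (j+1) * pi * (real n)^2"]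
  show ?thesis
    by (simp add: profile_def[abs_def] algebra_simps)
qed

lemma profile_continuous:
  assumes "j + 2 \<le> n"
  shows "continuous_on {0..} (profile n j)"
  unfolding profile_def using kernel_integral_continuous[of "j+2" n] assms
  by (auto intro!: continuous_intros)

text \<open>Both charts of the sphere carry the same function G(x) = pi n^2 K(|x|^2), which is C^3
  by Ck_on_radial and positive since K is.\<close>
theorem proposition4p5:
  fixes n :: nat
  assumes "n \<ge> 5"
  shows "(\<exists>G :: complex \<Rightarrow> real.
            (\<forall>a. a \<noteq> 0 \<longrightarrow> G a = Ffac n (cmod a)) \<and>
            Ck_on 3 UNIV G \<and> (\<forall>a. G a > 0)) \<and>
         (\<exists>H :: complex \<Rightarrow> real.
            (\<forall>w. w \<noteq> 0 \<longrightarrow> H w = Ffac n (1 / cmod w) / (cmod w) ^ 4) \<and>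
            Ck_on 3 UNIV H \<and> (\<forall>w. H w > 0))"
proof -
  define G where "G = (\<lambda>x. profile n 0 (norm_sq x))"
  have G_eq: "G x = pi * (real n)^2 * kernel_integral n 2 ((cmod x)^2)" for x
    by (simp add: G_def profile_def norm_sq_eq_cmod_sq numeral_2_eq_2)
  have "Ck_on 3 UNIV G"
    unfolding G_def using assms by (intro Ck_on_radial profile_deriv profile_continuous) auto
  moreover have "G x > 0" for x
    unfolding G_eq using kernel_integral_pos[of 2 n "(cmod x)^2"] assms by simp
  moreover have "G a = Ffac n (cmod a)" if "a \<noteq> 0" for a
    unfolding G_eq using Ffac_eq_kernel_integral[of n "cmod a"] assms that by simp
  moreover have "G w = Ffac n (1 / cmod w) / (cmod w)^4" if "w \<noteq> 0" for w
    unfolding G_eq using Ffac_inversion_eq_kernel_integral[of n "cmod w"] assms that by simp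
  ultimately show ?thesis by blast
qed

end
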